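(* Let $n\ge1$ and let $x\in\mathcal{A}_n(\{0121,0112\})$. Let $x^+$ denote the subsequence of positive entries of $x$. Then exactly one of the following holds: (label $(0)$) $x=0^n$; (label $(01)$) $x^+=12\cdots m$ for some $m\ge1$; (label $(011)$) $x^+=12\cdots(m-1)m^s$ for some $m\ge1$ and $s\ge2$. Moreover, writing $m=\max(x)$, the letters $t$ for which the sequence $xt$ (obtained by appending $t$) lies in $\mathcal{A}_{n+1}(\{0121,0112\})$, together with the labels of the resulting $xt$, are exactly: - if $x$ has label $(0)$: $t=0$ (label $(0)$) and $t=1$ (label $(01)$); - if $x$ has label $(01)$: $t=0$ (label $(01)$), $t=m$ (label $(011)$), and $t=m+1$ (label $(01)$); - if $x$ has label $(011)$: $t=0$ and $t=m$, both giving label $(011)$.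
   Context: An ascent in an integer sequence $s_1\cdots s_m$ is an index $j$ with $s_j<s_{j+1}$; $\mathrm{asc}$ denotes the number of ascents. An ascent sequence is a sequence $x_1\cdots x_n$ of nonnegative integers with $x_1=0$ and $x_i\le 1+\mathrm{asc}(x_1\cdots x_{i-1})$ for all $i\ge2$. The reduction $\mathrm{red}(w)$ of an integer sequence $w$ replaces the $i$-th smallest distinct letter of $w$ by $i-1$; a pattern is a reduced sequence. A sequence $x$ contains a pattern $p=p_1\cdots p_k$ if there are indices $i_1<\cdots<i_k$ with $\mathrm{red}(x_{i_1}\cdots x_{i_k})=p$; otherwise $x$ avoids $p$. For a finite set $P$ of patterns, $\mathcal{A}_n(P)$ denotes the set of ascent sequences of length $n$ avoiding every pattern in $P$. Here $c^s$ denotes $s$ consecutive copies of the letter $c$. *)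

theory Defs
  imports Main "HOL-Library.Sublist"
begin

definition asc :: "nat list \<Rightarrow> nat" where
  "asc s = card {j. Suc j < length s \<and> s ! j < s ! Suc j}"

definition ascent_seq :: "nat list \<Rightarrow> bool" where
  "ascent_seq x \<longleftrightarrow> (x \<noteq> [] \<longrightarrow> x ! 0 = 0) \<and>
     (\<forall>i. 1 \<le> i \<and> i < length x \<longrightarrow> x ! i \<le> 1 + asc (take i x))"

definition red :: "nat list \<Rightarrow> nat list" where
  "red w = map (\<lambda>a. card {b \<in> set w. b < a}) w"

definition contains :: "nat list \<Rightarrow> nat list \<Rightarrow> bool" where
  "contains x p \<longleftrightarrow> (\<exists>ys. subseq ys x \<and> red ys = p)"

definition avoids_all :: "nat list \<Rightarrow> nat list set \<Rightarrow> bool" where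
  "avoids_all x P \<longleftrightarrow> (\<forall>p\<in>P. \<not> contains x p)"

definition Asc_av :: "nat \<Rightarrow> nat list set \<Rightarrow> nat list set" where
  "Asc_av n P = {x. length x = n \<and> ascent_seq x \<and> avoids_all x P}"

datatype label = L0 | L01 | L011

definition pos_part :: "nat list \<Rightarrow> nat list" where
  "pos_part x = filter (\<lambda>a. 0 < a) x"

fun has_label :: "nat list \<Rightarrow> label \<Rightarrow> bool" where
  "has_label x L0 \<longleftrightarrow> x = replicate (length x) 0"
| "has_label x L01 \<longleftrightarrow> (\<exists>m\<ge>1. pos_part x = [1..<m+1])"
| "has_label x L011 \<longleftrightarrow> (\<exists>m\<ge>1. \<exists>s\<ge>2. pos_part x = [1..<m] @ replicate s m)"

end

theory Submission
  imports Defs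
begin

(* An ascent sequence x starts with its least letter 0, so a copy of 0121 or 0112 in x can
   always use that initial 0; hence x avoids both patterns exactly when its positive part x^+
   avoids 010 and 001. Thus x^+ is weakly increasing and only its maximum may repeat, so x^+
   is empty or of the form 1 2 ... (m-1) m^s. In the latter case appending a letter t > 0
   keeps the pattern condition iff t = m, or t > m while m occurs once. The ascent condition
   t <= 1 + asc x settles the rest, because max x <= asc x <= |x^+|; in particular
   asc x = m when m occurs once. *)

abbreviation P_0121_0112 :: "nat list set" where
  "P_0121_0112 \<equiv> {[0,1,2,1], [0,1,1,2]}"

abbreviation plateau :: "nat \<Rightarrow> nat \<Rightarrow> nat list" where
  "plateau m s \<equiv> [1..<m] @ replicate s m"

lemma asc_snoc:
  "asc (x @ [t]) = asc x + (if x \<noteq> [] \<and> last x < t then 1 else 0)"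
proof -
  let ?A = "{j. Suc j < length x \<and> x ! j < x ! Suc j}"
  have "{j. Suc j < length (x @ [t]) \<and> (x @ [t]) ! j < (x @ [t]) ! Suc j}
      = ?A \<union> {j. x \<noteq> [] \<and> j = length x - 1 \<and> last x < t}"
    by (cases x rule: rev_exhaust) (auto simp: nth_append less_Suc_eq)
  moreover have "finite ?A" by (rule finite_subset[of _ "{..<length x}"]) auto
  moreover have "length x - 1 \<notin> ?A" by auto
  ultimately show ?thesis unfolding asc_def by (auto simp: Collect_conv_if)
qed

lemma ascent_seq_snoc_iff:
  assumes "x \<noteq> []"
  shows "ascent_seq (x @ [t]) \<longleftrightarrow> ascent_seq x \<and> t \<le> 1 + asc x"
  using assms unfolding ascent_seq_def
  by (auto simp: nth_append less_Suc_eq) (metis Suc_leI length_greater_0_conv nat_less_le)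

lemma pos_part_snoc: "pos_part (x @ [t]) = pos_part x @ (if 0 < t then [t] else [])"
  by (simp add: pos_part_def)

lemma asc_le_length_pos_part: "asc x \<le> length (pos_part x)"
  by (induction x rule: rev_induct) (auto simp: asc_def[of "[]"] asc_snoc pos_part_snoc)

lemma Max_le_asc:
  assumes "ascent_seq x" "x \<noteq> []"
  shows "Max (set x) \<le> asc x"
  using assms
proof (induction x rule: rev_induct)
  case Nil
  then show ?case by simp
next
  case (snoc t y)
  show ?case
  proof (cases "y = []")
    case True
    then show ?thesis using snoc.prems by (simp add: ascent_seq_def)
  next
    case False
    have y: "ascent_seq y" "t \<le> 1 + asc y"
      using snoc.prems(1) ascent_seq_snoc_iff[OF False] by auto
    have IH: "Max (set y) \<le> asc y" using snoc.IH y(1) False by blast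
    have Max: "Max (set (y @ [t])) = max (Max (set y)) t"
      using False by (simp add: max.commute)
    show ?thesis
    proof (cases "t \<le> Max (set y)")
      case True
      then show ?thesis using IH Max by (simp add: asc_snoc)
    next
      case False
      have "last y \<le> Max (set y)" using \<open>y \<noteq> []\<close> by simp
      then have "last y < t" using False by linarith
      then have "asc (y @ [t]) = asc y + 1" using \<open>y \<noteq> []\<close> by (simp add: asc_snoc)
      then show ?thesis using Max y(2) False by simp
    qed
  qed
qed

section \<open>Reduction and pattern containment\<close>

lemma set_mono_subseq: "subseq xs ys \<Longrightarrow> set xs \<subseteq> set ys"
  by (metis subseq_conv_nths set_nths_subset)

lemma sorted_subseq: "subseq xs ys \<Longrightarrow> sorted ys \<Longrightarrow> sorted xs"
  by (metis subseq_conv_nths sorted_nths)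

lemma distinct_subseq: "subseq xs ys \<Longrightarrow> distinct ys \<Longrightarrow> distinct xs"
  by (metis subseq_conv_nths distinct_nthsI)

lemma length_red [simp]: "length (red w) = length w"
  by (simp add: red_def)

lemma red_nth_less_iff:
  assumes "i < length w" "j < length w"
  shows "red w ! i < red w ! j \<longleftrightarrow> w ! i < w ! j"
proof -
  let ?below = "\<lambda>a. {b \<in> set w. b < a}"
  have "card (?below a) < card (?below c) \<longleftrightarrow> a < c" if "a \<in> set w" "c \<in> set w" for a c
  proof
    assume "a < c"
    then have "?below a \<subset> ?below c" using that by auto
    then show "card (?below a) < card (?below c)" by (simp add: psubset_card_mono)
  next
    assume "card (?below a) < card (?below c)"
    then have "\<not> ?below c \<subseteq> ?below a" using card_mono[of "?below a" "?below c"] by auto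
    then show "a < c" by auto
  qed
  then show ?thesis using assms by (simp add: red_def)
qed

lemma red_two_letters:
  assumes "set w = {a, b}" "a < b"
  shows "red w = map (\<lambda>c. if c = b then 1 else 0) w"
proof -
  have "card {d \<in> {a, b}. d < c} = (if c = b then 1 else 0)" if "c \<in> {a, b}" for c
  proof -
    have "{d \<in> {a, b}. d < c} = (if c = b then {a} else {})" using that assms(2) by auto
    then show ?thesis by simp
  qed
  then show ?thesis unfolding red_def assms(1) by (simp add: assms(1) [symmetric])
qed

lemma red_Cons_below:
  assumes "\<forall>c\<in>set w. a < c"
  shows "red (a # w) = 0 # map Suc (red w)"
proof -
  have "{b \<in> insert a (set w). b < c} = insert a {b \<in> set w. b < c}" if "c \<in> set w" for c
    using that assms by auto
  moreover have "a \<notin> set w" using assms by blast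
  ultimately show ?thesis using assms by (auto simp: red_def)
qed

lemma contains_Cons_zero_iff:
  "contains (0 # r) (0 # map Suc p) \<longleftrightarrow> contains (pos_part r) p"
proof
  assume "contains (0 # r) (0 # map Suc p)"
  then obtain ys where ys: "subseq ys (0 # r)" "red ys = 0 # map Suc p"
    unfolding contains_def by blast
  then obtain a w where ys_eq: "ys = a # w" by (cases ys) (auto simp: red_def)
  have below: "\<forall>c\<in>set w. a < c"
  proof
    fix c assume "c \<in> set w"
    then obtain j where j: "j < length w" "w ! j = c" by (auto simp: in_set_conv_nth)
    have "length w = length p" using arg_cong[OF ys(2), of length] ys_eq by simp
    then have "red ys ! 0 < red ys ! Suc j" using ys(2) j(1) by simp
    then show "a < c" using red_nth_less_iff[of 0 ys "Suc j"] ys_eq j by simp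
  qed
  have "subseq w (0 # r)" using ys(1) unfolding ys_eq by (rule subseq_Cons')
  then have "subseq (filter (\<lambda>c. 0 < c) w) (filter (\<lambda>c. 0 < c) (0 # r))"
    by (rule subseq_filter)
  then have "subseq (filter (\<lambda>c. 0 < c) w) (pos_part r)" by (simp add: pos_part_def)
  moreover have "filter (\<lambda>c. 0 < c) w = w" using below by (auto simp: filter_id_conv)
  moreover have "red w = p" using ys(2) red_Cons_below[OF below] ys_eq by simp
  ultimately show "contains (pos_part r) p" unfolding contains_def by auto
next
  assume "contains (pos_part r) p"
  then obtain w where w: "subseq w (pos_part r)" "red w = p" unfolding contains_def by blast
  have "\<forall>c\<in>set w. 0 < c" using set_mono_subseq[OF w(1)] by (auto simp: pos_part_def)
  then have "red (0 # w) = 0 # map Suc p" using red_Cons_below w(2) by simp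
  moreover have "subseq w r"
    using w(1) subseq_order.trans[OF _ subseq_filter_left] unfolding pos_part_def by blast
  then have "subseq (0 # w) (0 # r)" by simp
  ultimately show "contains (0 # r) (0 # map Suc p)" unfolding contains_def by blast
qed

lemma contains_010_iff: "contains w [0,1,0] \<longleftrightarrow> (\<exists>a b. a < b \<and> subseq [a,b,a] w)"
proof
  assume "contains w [0,1,0]"
  then obtain ys where ys: "subseq ys w" "red ys = [0,1,0]" unfolding contains_def by blast
  then have "length ys = 3" using length_red[of ys] by simp
  then obtain a b c where abc: "ys = [a,b,c]" by (auto simp: numeral_3_eq_3 length_Suc_conv)
  have "a < b" "\<not> a < c" "\<not> c < a"
    using ys(2) abc red_nth_less_iff[of 0 ys 1] red_nth_less_iff[of 0 ys 2]
      red_nth_less_iff[of 2 ys 0] by simp_all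
  then show "\<exists>a b. a < b \<and> subseq [a,b,a] w" using ys(1) abc by (metis nat_neq_iff)
next
  assume "\<exists>a b. a < b \<and> subseq [a,b,a] w"
  then obtain a b where "a < b" "subseq [a,b,a] w" by blast
  moreover have "red [a,b,a] = [0,1,0]" using red_two_letters[of "[a,b,a]" a b] \<open>a < b\<close> by auto
  ultimately show "contains w [0,1,0]" unfolding contains_def by blast
qed

lemma contains_001_iff: "contains w [0,0,1] \<longleftrightarrow> (\<exists>a b. a < b \<and> subseq [a,a,b] w)"
proof
  assume "contains w [0,0,1]"
  then obtain ys where ys: "subseq ys w" "red ys = [0,0,1]" unfolding contains_def by blast
  then have "length ys = 3" using length_red[of ys] by simp
  then obtain a b c where abc: "ys = [a,b,c]" by (auto simp: numeral_3_eq_3 length_Suc_conv)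
  have "a < c" "\<not> a < b" "\<not> b < a"
    using ys(2) abc red_nth_less_iff[of 0 ys 2] red_nth_less_iff[of 0 ys 1]
      red_nth_less_iff[of 1 ys 0] by simp_all
  then show "\<exists>a b. a < b \<and> subseq [a,a,b] w" using ys(1) abc by (metis nat_neq_iff)
next
  assume "\<exists>a b. a < b \<and> subseq [a,a,b] w"
  then obtain a b where "a < b" "subseq [a,a,b] w" by blast
  moreover have "red [a,a,b] = [0,0,1]" using red_two_letters[of "[a,a,b]" a b] \<open>a < b\<close> by auto
  ultimately show "contains w [0,0,1]" unfolding contains_def by blast
qed

lemma avoids_0121_0112_iff:
  "avoids_all (0 # r) P_0121_0112 \<longleftrightarrow> avoids_all (pos_part r) {[0,1,0], [0,0,1]}"
proof -
  have "[0,1,2,1] = 0 # map Suc [0,1,0]" "[0,1,1,2] = 0 # map Suc [0,0,1]" by simp_all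
  then show ?thesis unfolding avoids_all_def by (simp only: ball_simps contains_Cons_zero_iff)
qed

section \<open>Positive parts avoiding 010 and 001\<close>

lemma sorted_distinct_avoids_010_001:
  assumes "sorted w" "distinct w"
  shows "avoids_all w {[0,1,0], [0,0,1]}"
proof -
  have "\<not> subseq [a,b,a] w" if "a < b" for a b
    using sorted_subseq[of "[a,b,a]" w] assms(1) that by auto
  moreover have "\<not> subseq [a,a,b] w" for a b
    using distinct_subseq[of "[a,a,b]" w] assms(2) by auto
  ultimately show ?thesis
    unfolding avoids_all_def ball_simps contains_010_iff contains_001_iff by blast
qed

lemma plateau_avoids_010_001: "avoids_all (plateau m s) {[0,1,0], [0,0,1]}"
proof -
  let ?w = "plateau m s"
  have "\<not> subseq [a,a,b] ?w" if "a < b" for a b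
  proof
    assume sub: "subseq [a,a,b] ?w"
    then have "b \<le> m" using set_mono_subseq[OF sub] by auto
    have "subseq (filter (\<lambda>c. c < m) [a,a,b]) (filter (\<lambda>c. c < m) ?w)"
      using sub by (rule subseq_filter)
    then have "subseq (a # a # filter (\<lambda>c. c < m) [b]) [1..<m]"
      using that \<open>b \<le> m\<close> by (simp add: filter_empty_conv)
    then show False using distinct_subseq by fastforce
  qed
  moreover have "\<not> subseq [a,b,a] ?w" if "a < b" for a b
    using sorted_subseq[of "[a,b,a]" ?w] that by (auto simp: sorted_append)
  ultimately show ?thesis
    unfolding avoids_all_def ball_simps contains_010_iff contains_001_iff by blast
qed

lemma plateau_snoc_avoids_010_001_iff:
  assumes "1 \<le> m" "1 \<le> s" "0 < t"
  shows "avoids_all (plateau m s @ [t]) {[0,1,0], [0,0,1]}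
    \<longleftrightarrow> t = m \<or> (s = 1 \<and> m < t)"
proof
  assume avoids: "avoids_all (plateau m s @ [t]) {[0,1,0], [0,0,1]}"
  show "t = m \<or> (s = 1 \<and> m < t)"
  proof (rule ccontr)
    assume "\<not> ?thesis"
    then consider "t < m" | "2 \<le> s" "m < t" using assms(2) by linarith
    then show False
    proof cases
      case 1
      then have "subseq (([t] @ [m]) @ [t]) (plateau m s @ [t])"
        using assms by (intro list_emb_append_mono) (auto simp: subseq_singleton_left)
      then have "contains (plateau m s @ [t]) [0,1,0]"
        unfolding contains_010_iff using 1 by auto
      then show False using avoids by (simp add: avoids_all_def)
    next
      case 2
      then obtain k where "s = Suc (Suc k)" by (metis add_2_eq_Suc le_Suc_ex)
      then have "subseq [m,m] (replicate s m)" by simp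
      then have "subseq (([] @ [m,m]) @ [t]) (plateau m s @ [t])"
        by (intro list_emb_append_mono) simp_all
      then have "contains (plateau m s @ [t]) [0,0,1]"
        unfolding contains_001_iff using 2 by auto
      then show False using avoids by (simp add: avoids_all_def)
    qed
  qed
next
  assume "t = m \<or> (s = 1 \<and> m < t)"
  then show "avoids_all (plateau m s @ [t]) {[0,1,0], [0,0,1]}"
  proof
    assume "t = m"
    then show ?thesis using plateau_avoids_010_001[of m "Suc s"] by (simp add: replicate_append_same)
  next
    assume "s = 1 \<and> m < t"
    then show ?thesis using assms by (intro sorted_distinct_avoids_010_001) (auto simp: sorted_append)
  qed
qed

section \<open>One-letter extensions\<close>

lemma Asc_av_snoc_iff:
  assumes "x \<in> Asc_av n P" "x \<noteq> []"
  shows "x @ [t] \<in> Asc_av (Suc n) P \<longleftrightarrow> t \<le> 1 + asc x \<and> avoids_all (x @ [t]) P"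
  using assms ascent_seq_snoc_iff[OF assms(2)] by (auto simp: Asc_av_def)

lemma Asc_av_snocD:
  assumes "x @ [t] \<in> Asc_av (Suc n) P" "x \<noteq> []"
  shows "x \<in> Asc_av n P"
proof -
  have "contains x p \<Longrightarrow> contains (x @ [t]) p" for p
    unfolding contains_def by (blast intro: subseq_rev_drop_many)
  then show ?thesis
    using assms ascent_seq_snoc_iff[OF assms(2)] by (auto simp: Asc_av_def avoids_all_def)
qed

lemma Asc_av_Cons_zero:
  assumes "x \<in> Asc_av n P" "x \<noteq> []"
  obtains r where "x = 0 # r"
proof (cases x)
  case (Cons a r)
  then have "a = 0" using assms(1) by (simp add: Asc_av_def ascent_seq_def)
  then show thesis using that Cons by blast
qed (use assms(2) in simp)

lemma Asc_av_0121_0112_snoc_iff: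
  assumes "x \<in> Asc_av n P_0121_0112" "x \<noteq> []"
  shows "x @ [t] \<in> Asc_av (Suc n) P_0121_0112 \<longleftrightarrow>
    t \<le> 1 + asc x \<and> avoids_all (pos_part x @ (if 0 < t then [t] else [])) {[0,1,0], [0,0,1]}"
proof -
  obtain r where "x = 0 # r" by (rule Asc_av_Cons_zero[OF assms])
  then show ?thesis
    using Asc_av_snoc_iff[OF assms] avoids_0121_0112_iff[of "r @ [t]"]
    by (simp add: pos_part_snoc pos_part_def)
qed

lemma Max_set_plateau:
  assumes "0 \<in> set x" "pos_part x = plateau m s" "1 \<le> s"
  shows "Max (set x) = m"
proof -
  have "set x = insert 0 (set (pos_part x))" using assms(1) by (auto simp: pos_part_def)
  then show ?thesis using assms(2,3) by (intro Max_eqI) auto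
qed

lemma extensions_plateau:
  assumes x: "x \<in> Asc_av n P_0121_0112" "x \<noteq> []"
    and pos: "pos_part x = plateau m s" and "1 \<le> m" "1 \<le> s"
  shows "{t. x @ [t] \<in> Asc_av (Suc n) P_0121_0112}
    = {0, m} \<union> (if s = 1 then {m + 1} else {})"
proof -
  have "ascent_seq x" using x(1) by (simp add: Asc_av_def)
  obtain r where "x = 0 # r" by (rule Asc_av_Cons_zero[OF x])
  then have "0 \<in> set x" by simp
  then have "Max (set x) = m" using Max_set_plateau[OF _ pos \<open>1 \<le> s\<close>] by blast
  then have m_le_asc: "m \<le> asc x" using Max_le_asc \<open>ascent_seq x\<close> x(2) by metis
  have asc_le: "asc x \<le> m" if "s = 1"
    using asc_le_length_pos_part[of x] pos that \<open>1 \<le> m\<close> by simp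
  have "x @ [t] \<in> Asc_av (Suc n) P_0121_0112 \<longleftrightarrow>
      t = 0 \<or> t = m \<or> (s = 1 \<and> t = m + 1)" for t
  proof (cases "t = 0")
    case True
    then show ?thesis
      using Asc_av_0121_0112_snoc_iff[OF x, of t] pos plateau_avoids_010_001 by simp
  next
    case False
    then have "avoids_all (pos_part x @ [t]) {[0,1,0], [0,0,1]} \<longleftrightarrow> t = m \<or> (s = 1 \<and> m < t)"
      using plateau_snoc_avoids_010_001_iff[OF \<open>1 \<le> m\<close> \<open>1 \<le> s\<close>, of t] pos by simp
    then show ?thesis
      using Asc_av_0121_0112_snoc_iff[OF x, of t] False m_le_asc asc_le by (cases "s = 1") auto
  qed
  then show ?thesis by auto
qed

lemma has_label_L0_iff: "has_label x L0 \<longleftrightarrow> pos_part x = []"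
  unfolding has_label.simps pos_part_def filter_empty_conv
  by (metis in_set_replicate replicate_length_same not_gr_zero)

lemma extensions_L0:
  assumes x: "x \<in> Asc_av n P_0121_0112" "x \<noteq> []" and "has_label x L0"
  shows "{t. x @ [t] \<in> Asc_av (n + 1) P_0121_0112} = {0, 1}"
    and "has_label (x @ [0]) L0" and "has_label (x @ [1]) L01"
proof -
  have pos: "pos_part x = []" using assms(3) has_label_L0_iff by blast
  then have "asc x = 0" using asc_le_length_pos_part[of x] by simp
  moreover have "avoids_all (if 0 < t then [t] else []) {[0,1,0], [0,0,1]}" for t :: nat
    by (intro sorted_distinct_avoids_010_001) auto
  ultimately show "{t. x @ [t] \<in> Asc_av (n + 1) P_0121_0112} = {0, 1}"
    using Asc_av_0121_0112_snoc_iff[OF x] pos by auto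
  show "has_label (x @ [0]) L0"
    unfolding has_label_L0_iff using pos by (simp add: pos_part_snoc)
  have "pos_part (x @ [1]) = [1..<1 + 1]" using pos by (simp add: pos_part_snoc)
  then show "has_label (x @ [1]) L01" by (metis has_label.simps(2) order_refl)
qed

lemma extensions_L01:
  fixes x :: "nat list"
  defines "m \<equiv> Max (set x)"
  assumes x: "x \<in> Asc_av n P_0121_0112" "x \<noteq> []" and "has_label x L01"
  shows "{t. x @ [t] \<in> Asc_av (n + 1) P_0121_0112} = {0, m, m + 1}"
    and "has_label (x @ [0]) L01" and "has_label (x @ [m]) L011"
    and "has_label (x @ [m + 1]) L01"
proof -
  obtain k where k: "1 \<le> k" "pos_part x = [1..<k + 1]"
    using assms(4) unfolding has_label.simps by blast
  then have plateau: "pos_part x = plateau k 1" by simp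
  obtain r where "x = 0 # r" by (rule Asc_av_Cons_zero[OF x])
  then have "m = k" unfolding m_def using Max_set_plateau[OF _ plateau] by simp
  show "{t. x @ [t] \<in> Asc_av (n + 1) P_0121_0112} = {0, m, m + 1}"
    using extensions_plateau[OF x plateau k(1)] \<open>m = k\<close> by auto
  have "pos_part (x @ [0]) = [1..<k + 1]" using k by (simp add: pos_part_snoc)
  then show "has_label (x @ [0]) L01" using k(1) by (metis has_label.simps(2))
  have "pos_part (x @ [m]) = plateau k 2"
    using k \<open>m = k\<close> by (simp add: pos_part_snoc numeral_2_eq_2)
  then show "has_label (x @ [m]) L011" using k(1) by (metis has_label.simps(3) order_refl)
  have "pos_part (x @ [m + 1]) = [1..<(k + 1) + 1]" using k \<open>m = k\<close> by (simp add: pos_part_snoc)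
  then show "has_label (x @ [m + 1]) L01" by (metis has_label.simps(2) le_add2)
qed

lemma extensions_L011:
  fixes x :: "nat list"
  defines "m \<equiv> Max (set x)"
  assumes x: "x \<in> Asc_av n P_0121_0112" "x \<noteq> []" and "has_label x L011"
  shows "{t. x @ [t] \<in> Asc_av (n + 1) P_0121_0112} = {0, m}"
    and "has_label (x @ [0]) L011" and "has_label (x @ [m]) L011"
proof -
  obtain k s where ks: "1 \<le> k" "2 \<le> s" and plateau: "pos_part x = plateau k s"
    using assms(4) unfolding has_label.simps by blast
  obtain r where "x = 0 # r" by (rule Asc_av_Cons_zero[OF x])
  then have "m = k" unfolding m_def using Max_set_plateau[OF _ plateau] ks by simp
  show "{t. x @ [t] \<in> Asc_av (n + 1) P_0121_0112} = {0, m}"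
    using extensions_plateau[OF x plateau ks(1)] ks(2) \<open>m = k\<close> by simp
  have "pos_part (x @ [0]) = plateau k s" using plateau by (simp add: pos_part_snoc)
  then show "has_label (x @ [0]) L011" using ks by (metis has_label.simps(3))
  have "pos_part (x @ [m]) = plateau k (Suc s)"
    using plateau ks(1) \<open>m = k\<close> by (simp add: pos_part_snoc replicate_append_same)
  then show "has_label (x @ [m]) L011" using ks by (metis has_label.simps(3) le_SucI)
qed

lemma has_label_exists:
  assumes "x \<in> Asc_av n P_0121_0112" "x \<noteq> []"
  shows "\<exists>L. has_label x L"
  using assms
proof (induction x arbitrary: n rule: rev_induct)
  case Nil
  then show ?case by simp
next
  case (snoc t y)
  show ?case
  proof (cases "y = []")
    case True
    then have "y @ [t] = [0]" using snoc.prems(1) by (simp add: Asc_av_def ascent_seq_def)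
    then have "has_label (y @ [t]) L0" by simp
    then show ?thesis ..
  next
    case False
    obtain k where n: "n = k + 1" using snoc.prems(1) by (cases n) (auto simp: Asc_av_def)
    then have y: "y \<in> Asc_av k P_0121_0112"
      using Asc_av_snocD snoc.prems(1) False by simp
    obtain L where "has_label y L" using snoc.IH[OF y False] by blast
    have t: "t \<in> {t. y @ [t] \<in> Asc_av (k + 1) P_0121_0112}" using snoc.prems(1) n by simp
    show ?thesis
    proof (cases L)
      case L0
      then have "has_label y L0" using \<open>has_label y L\<close> by simp
      note ext = extensions_L0[OF y False this]
      from t[unfolded ext(1)] show ?thesis using ext(2,3) by blast
    next
      case L01
      then have "has_label y L01" using \<open>has_label y L\<close> by simp
      note ext = extensions_L01[OF y False this]
      from t[unfolded ext(1)] show ?thesis using ext(2-4) by blast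
    next
      case L011
      then have "has_label y L011" using \<open>has_label y L\<close> by simp
      note ext = extensions_L011[OF y False this]
      from t[unfolded ext(1)] show ?thesis using ext(2,3) by blast
    qed
  qed
qed

lemma has_label_unique:
  assumes "has_label x L" "has_label x L'"
  shows "L = L'"
proof -
  have L01_shape: "pos_part x \<noteq> [] \<and> distinct (pos_part x)" if "has_label x L01"
    using that by auto
  have L011_shape: "pos_part x \<noteq> [] \<and> \<not> distinct (pos_part x)" if "has_label x L011"
  proof -
    obtain m s where "pos_part x = plateau m s" "2 \<le> s"
      using \<open>has_label x L011\<close> unfolding has_label.simps by blast
    moreover obtain k where "s = Suc (Suc k)" using \<open>2 \<le> s\<close> by (metis add_2_eq_Suc le_Suc_ex)
    ultimately show ?thesis by simp
  qed
  show ?thesis using assms L01_shape L011_shape has_label_L0_iff by (cases L; cases L') blast+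
qed

theorem lemma3p3:
  fixes n :: nat and x :: "nat list"
  defines "P \<equiv> {[0,1,2,1], [0,1,1,2]}"
  assumes "n \<ge> 1" and "x \<in> Asc_av n P"
  shows "(\<exists>!L. has_label x L) \<and>
    (let m = Max (set x) in
      (has_label x L0 \<longrightarrow>
         {t. x @ [t] \<in> Asc_av (n+1) P} = {0, 1} \<and>
         has_label (x @ [0]) L0 \<and> has_label (x @ [1]) L01) \<and>
      (has_label x L01 \<longrightarrow>
         {t. x @ [t] \<in> Asc_av (n+1) P} = {0, m, m+1} \<and>
         has_label (x @ [0]) L01 \<and> has_label (x @ [m]) L011 \<and> has_label (x @ [m+1]) L01) \<and>
      (has_label x L011 \<longrightarrow>
         {t. x @ [t] \<in> Asc_av (n+1) P} = {0, m} \<and>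
         has_label (x @ [0]) L011 \<and> has_label (x @ [m]) L011))"
proof -
  have x: "x \<in> Asc_av n P_0121_0112" "x \<noteq> []"
    using assms(2,3) unfolding P_def Asc_av_def by auto
  obtain L where "has_label x L" using has_label_exists[OF x] by blast
  then have "\<exists>!L. has_label x L" using has_label_unique by blast
  then show ?thesis
    using extensions_L0[OF x] extensions_L01[OF x] extensions_L011[OF x]
    unfolding P_def Let_def by (auto simp del: has_label.simps)
qed

end
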